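(* Let $P_n$ ($n\ge1$) and $P$ be Borel probability measures on $C[0,1]$ (with the sup-norm topology). Assume that for every $n$, $P_n$-almost every $f\in C[0,1]$ is convex. If all finite-dimensional distributions of $P_n$ converge weakly to the corresponding finite-dimensional distributions of $P$, then $P_n$ converges weakly to $P$.
   Context: The finite-dimensional distributions of a Borel probability measure $Q$ on $C[0,1]$ are the push-forwards of $Q$ under the maps $f\mapsto(f(t_1),\dots,f(t_k))\in\mathbb R^k$ for $k\ge1$ and $t_1,\dots,t_k\in[0,1]$. *)

theory Defs
  imports "HOL-Analysis.Analysis" "HOL-Probability.Probability"
begin

typedef I01 = "{0..1::real}"
  by auto

instantiation I01 :: metric_space
begin

definition dist_I01 :: "I01 \<Rightarrow> I01 \<Rightarrow> real"
  where "dist_I01 x y = dist (Rep_I01 x) (Rep_I01 y)"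

definition uniformity_I01 :: "(I01 \<times> I01) filter"
  where "uniformity_I01 = (INF e\<in>{0 <..}. principal {(x, y). dist x y < e})"

definition open_I01 :: "I01 set \<Rightarrow> bool"
  where "open_I01 S = (\<forall>x\<in>S. \<forall>\<^sub>F (x', y) in uniformity. x' = x \<longrightarrow> y \<in> S)"

instance
proof
  fix x y z :: I01
  show "(dist x y = 0) = (x = y)"
    by (simp add: dist_I01_def Rep_I01_inject)
  show "dist x y \<le> dist x z + dist y z"
    unfolding dist_I01_def by (rule dist_triangle2)
qed (simp_all add: uniformity_I01_def open_I01_def)

end

text \<open>C[0,1] with the sup-norm: bounded continuous functions on [0,1]
  (every continuous function on the compact interval is bounded).\<close>

type_synonym C01 = "I01 \<Rightarrow>\<^sub>C real"

definition convex_C01 :: "C01 \<Rightarrow> bool"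
  where "convex_C01 f \<longleftrightarrow> convex_on {0..1} (\<lambda>x. apply_bcontfun f (Abs_I01 x))"

definition weak_conv_seq :: "(nat \<Rightarrow> 'a::topological_space measure) \<Rightarrow> 'a measure \<Rightarrow> bool"
  where "weak_conv_seq Ms M \<longleftrightarrow>
    (\<forall>g :: 'a \<Rightarrow> real. continuous_on UNIV g \<longrightarrow> bounded (range g) \<longrightarrow>
       (\<lambda>n. integral\<^sup>L (Ms n) g) \<longlonglongrightarrow> integral\<^sup>L M g)"

text \<open>The vector (f(t_0),...,f(t_{k-1})) in R^k, with R^k realised as the closed
  subspace {x :: nat \<Rightarrow> real. \<forall>i\<ge>k. x i = 0} of the product space (padding with zeros).\<close>

definition fidi_proj :: "nat \<Rightarrow> (nat \<Rightarrow> I01) \<Rightarrow> C01 \<Rightarrow> (nat \<Rightarrow> real)"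
  where "fidi_proj k t f = (\<lambda>i. if i < k then apply_bcontfun f (t i) else 0)"

end

theory Submission
  imports Defs
begin

text \<open>Let \<open>L\<^sub>m f\<close> be the polygon interpolating \<open>f\<close> at the grid points \<open>j/m\<close>. For convex \<open>f\<close> the
  sup-distance from \<open>f\<close> to \<open>L\<^sub>m f\<close> is at most the largest second difference \<open>\<delta>\<^sub>m f\<close> of the grid
  values, which is a continuous function of finitely many values of \<open>f\<close>. So for a bounded
  \<open>K\<close>-Lipschitz \<open>g\<close>, both \<open>\<integral>g\<circ>L\<^sub>m\<close> and \<open>\<integral>min (2B) (K \<delta>\<^sub>m)\<close> are determined by finite-dimensional
  distributions and converge along \<open>P\<^sub>n\<close>, giving
  \<open>lim sup\<^sub>n \<bar>\<integral>g dP\<^sub>n - \<integral>g dP\<bar> \<le> \<integral>min (2B) (K \<delta>\<^sub>m) dP + \<integral>\<bar>g - g\<circ>L\<^sub>m\<bar> dP\<close>. Convexity is only used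
  under \<open>P\<^sub>n\<close>; under \<open>P\<close> both terms tend to 0 as \<open>m \<rightarrow> \<infinity>\<close> for every continuous \<open>f\<close>, by
  uniform continuity and dominated convergence. Finally, bounded Lipschitz functions determine
  weak convergence, since a bounded continuous \<open>g\<close> is the increasing limit of the Lipschitz
  functions \<open>x \<mapsto> inf\<^sub>y g y + k d(x,y)\<close>.\<close>

lemma borel_measurable_continuous_on_sets_borel:
  assumes "sets M = sets borel" and "continuous_on UNIV h"
  shows "h \<in> borel_measurable M"
  using borel_measurable_continuous_onI[OF assms(2)] measurable_cong_sets[OF assms(1) refl] by blast

lemma integrable_bounded_continuous:
  fixes h :: "'a::topological_space \<Rightarrow> real"
  assumes "finite_measure M" "sets M = sets borel" "continuous_on UNIV h" "\<And>x. \<bar>h x\<bar> \<le> B"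
  shows "integrable M h"
  using assms borel_measurable_continuous_on_sets_borel[OF assms(2,3)]
  by (intro finite_measure.integrable_const_bound[where B = B]) auto

lemma tendsto_integral_bounded_continuous:
  fixes h :: "nat \<Rightarrow> 'a::topological_space \<Rightarrow> real"
  assumes M: "finite_measure M" "sets M = sets borel"
    and cont: "\<And>k. continuous_on UNIV (h k)" "continuous_on UNIV l"
    and bound: "\<And>k x. \<bar>h k x\<bar> \<le> B"
    and lim: "\<And>x. (\<lambda>k. h k x) \<longlonglongrightarrow> l x"
  shows "(\<lambda>k. \<integral>x. h k x \<partial>M) \<longlonglongrightarrow> (\<integral>x. l x \<partial>M)"
proof (rule integral_dominated_convergence[where w = "\<lambda>_. B"])
  show "integrable M (\<lambda>_. B)"
    using M(1) by (simp add: finite_measure.integrable_const)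
qed (use borel_measurable_continuous_on_sets_borel[OF M(2)] cont bound lim in auto)

lemma weak_conv_seq_distrD:
  fixes h :: "'a::topological_space \<Rightarrow> 'b::topological_space" and G :: "'b \<Rightarrow> real"
  assumes "weak_conv_seq (\<lambda>n. distr (Ms n) borel h) (distr M borel h)"
    and "\<And>n. sets (Ms n) = sets borel" "sets M = sets borel" "continuous_on UNIV h"
    and "continuous_on UNIV G" "bounded (range G)"
  shows "(\<lambda>n. \<integral>x. G (h x) \<partial>Ms n) \<longlonglongrightarrow> (\<integral>x. G (h x) \<partial>M)"
proof -
  have G: "G \<in> borel_measurable borel"
    using assms(5) by (rule borel_measurable_continuous_onI)
  have distr: "integral\<^sup>L (distr N borel h) G = (\<integral>x. G (h x) \<partial>N)" if "sets N = sets borel" for N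
    using integral_distr[OF borel_measurable_continuous_on_sets_borel[OF that assms(4)] G] .
  have "(\<lambda>n. integral\<^sup>L (distr (Ms n) borel h) G) \<longlonglongrightarrow> integral\<^sup>L (distr M borel h) G"
    using assms(1,5,6) unfolding weak_conv_seq_def by blast
  then show ?thesis
    by (simp only: distr assms(2,3))
qed

section \<open>Bounded Lipschitz functions determine weak convergence\<close>

definition lipschitz_minorant :: "nat \<Rightarrow> ('a::metric_space \<Rightarrow> real) \<Rightarrow> 'a \<Rightarrow> real"
  where "lipschitz_minorant k g x = (INF y. g y + real k * dist x y)"

context
  fixes g :: "'a::metric_space \<Rightarrow> real" and B :: real
  assumes g_bound: "\<And>x. \<bar>g x\<bar> \<le> B"
begin

lemma lipschitz_minorant_term_ge: "- B \<le> g y + real k * dist x y"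
  by (rule add_increasing2) (use g_bound[of y] in \<open>auto simp: abs_le_iff\<close>)

lemma bdd_below_lipschitz_minorant: "bdd_below (range (\<lambda>y. g y + real k * dist x y))"
  using lipschitz_minorant_term_ge by (intro bdd_belowI[where m = "-B"]) auto

lemma lipschitz_minorant_le_dist: "lipschitz_minorant k g x \<le> g y + real k * dist x y"
  unfolding lipschitz_minorant_def by (rule cINF_lower[OF bdd_below_lipschitz_minorant]) simp

lemma lipschitz_minorant_le: "lipschitz_minorant k g x \<le> g x"
  using lipschitz_minorant_le_dist[of k x x] by simp

lemma lipschitz_minorant_ge: "- B \<le> lipschitz_minorant k g x"
  unfolding lipschitz_minorant_def
  by (rule cINF_greatest) (auto intro: lipschitz_minorant_term_ge)

lemma abs_lipschitz_minorant_le: "\<bar>lipschitz_minorant k g x\<bar> \<le> B"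
  using lipschitz_minorant_le[of k x] lipschitz_minorant_ge[of k x] g_bound[of x] by auto

lemma lipschitz_on_lipschitz_minorant: "(real k)-lipschitz_on UNIV (lipschitz_minorant k g)"
proof -
  have one_sided: "lipschitz_minorant k g x \<le> lipschitz_minorant k g x' + real k * dist x x'" for x x'
  proof -
    have "lipschitz_minorant k g x - real k * dist x x' \<le> g y + real k * dist x' y" for y
      using lipschitz_minorant_le_dist[of k x y] dist_triangle[of x y x']
        mult_left_mono[of "dist x y" "dist x x' + dist x' y" "real k"]
      by (simp add: distrib_left)
    then have "lipschitz_minorant k g x - real k * dist x x' \<le> lipschitz_minorant k g x'"
      unfolding lipschitz_minorant_def[of k g x'] by (intro cINF_greatest) auto
    then show ?thesis by simp
  qed
  then have "dist (lipschitz_minorant k g x) (lipschitz_minorant k g x') \<le> real k * dist x x'" for x x'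
    using one_sided[of x x'] one_sided[of x' x, unfolded dist_commute[of x' x]]
    unfolding dist_real_def abs_le_iff by (intro conjI) linarith+
  then show ?thesis
    by (intro lipschitz_onI) auto
qed

lemma tendsto_lipschitz_minorant:
  assumes "continuous_on UNIV g"
  shows "(\<lambda>k. lipschitz_minorant k g x) \<longlonglongrightarrow> g x"
proof (rule order_tendstoI)
  fix a assume "g x < a"
  then show "\<forall>\<^sub>F k in sequentially. lipschitz_minorant k g x < a"
    using lipschitz_minorant_le le_less_trans by (intro always_eventually) blast
next
  fix a assume "a < g x"
  then obtain b where b: "a < b" "b < g x"
    using dense by blast
  obtain d where "d > 0" and close: "\<And>y. dist y x < d \<Longrightarrow> dist (g y) (g x) < g x - b"
    using assms b(2) unfolding continuous_on_iff by (metis UNIV_I diff_gt_0_iff_gt)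
  then have d: "d > 0" "\<And>y. dist y x < d \<Longrightarrow> b < g y"
    by (auto simp: dist_real_def dest!: close)
  have above: "b \<le> lipschitz_minorant k g x" if k: "(b + B) / d < real k" for k
    unfolding lipschitz_minorant_def
  proof (rule cINF_greatest)
    fix y
    show "b \<le> g y + real k * dist x y"
    proof (cases "dist y x < d")
      case True
      then show ?thesis using d(2) by (simp add: add_increasing2 less_imp_le)
    next
      case False
      have "b + B < real k * d"
        using k d(1) by (simp add: pos_divide_less_eq mult.commute)
      also have "\<dots> \<le> real k * dist x y"
        using False by (simp add: dist_commute mult_left_mono)
      finally have "b + B < real k * dist x y" .
      then show ?thesis using g_bound[of y] by (simp add: abs_le_iff)
    qed
  qed simp
  have "\<forall>\<^sub>F k in sequentially. (b + B) / d < real k"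
    by (rule filterlim_real_sequentially[THEN filterlim_at_top_dense[THEN iffD1], rule_format])
  then show "\<forall>\<^sub>F k in sequentially. a < lipschitz_minorant k g x"
    by (rule eventually_mono) (use b(1) above in \<open>blast intro: less_le_trans\<close>)
qed

end

lemma eventually_less_integral_if_lipschitz:
  fixes Ms :: "nat \<Rightarrow> 'a::metric_space measure" and g :: "'a \<Rightarrow> real"
  assumes Ms: "\<And>n. prob_space (Ms n)" "\<And>n. sets (Ms n) = sets borel"
    and M: "prob_space M" "sets M = sets borel"
    and lipschitz: "\<And>(h :: 'a \<Rightarrow> real) K B. K-lipschitz_on UNIV h \<Longrightarrow> (\<And>x. \<bar>h x\<bar> \<le> B) \<Longrightarrow>
      (\<lambda>n. \<integral>x. h x \<partial>Ms n) \<longlonglongrightarrow> (\<integral>x. h x \<partial>M)"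
    and g: "continuous_on UNIV g" "\<And>x. \<bar>g x\<bar> \<le> B" and a: "a < (\<integral>x. g x \<partial>M)"
  shows "\<forall>\<^sub>F n in sequentially. a < (\<integral>x. g x \<partial>Ms n)"
proof -
  have minorant: "(real k)-lipschitz_on UNIV (lipschitz_minorant k g)"
    "\<bar>lipschitz_minorant k g x\<bar> \<le> B" for k x
    using lipschitz_on_lipschitz_minorant[of g B k] abs_lipschitz_minorant_le[of g B k x] g(2)
    by blast+
  have minorant_cont: "continuous_on UNIV (lipschitz_minorant k g)" for k
    using minorant(1) by (rule lipschitz_on_continuous_on)
  have "(\<lambda>k. \<integral>x. lipschitz_minorant k g x \<partial>M) \<longlonglongrightarrow> (\<integral>x. g x \<partial>M)"
    using M minorant(2) minorant_cont g
    by (intro tendsto_integral_bounded_continuous tendsto_lipschitz_minorant)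
      (auto simp: prob_space.finite_measure)
  from order_tendstoD(1)[OF this a] obtain k where k: "a < (\<integral>x. lipschitz_minorant k g x \<partial>M)"
    by (auto simp: eventually_sequentially)
  have mono: "(\<integral>x. lipschitz_minorant k g x \<partial>Ms n) \<le> (\<integral>x. g x \<partial>Ms n)" for n
    using Ms minorant(2) minorant_cont g
    by (intro integral_mono integrable_bounded_continuous lipschitz_minorant_le)
      (auto simp: prob_space.finite_measure)
  have "\<forall>\<^sub>F n in sequentially. a < (\<integral>x. lipschitz_minorant k g x \<partial>Ms n)"
    using order_tendstoD(1)[OF lipschitz[OF minorant(1)[of k] minorant(2)[of k]] k] .
  then show ?thesis
    by (rule eventually_mono) (use mono in \<open>blast intro: less_le_trans\<close>)
qed

lemma weak_conv_seq_if_lipschitz: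
  fixes Ms :: "nat \<Rightarrow> 'a::metric_space measure"
  assumes Ms: "\<And>n. prob_space (Ms n)" "\<And>n. sets (Ms n) = sets borel"
    and M: "prob_space M" "sets M = sets borel"
    and lipschitz: "\<And>(g :: 'a \<Rightarrow> real) K B. K-lipschitz_on UNIV g \<Longrightarrow> (\<And>x. \<bar>g x\<bar> \<le> B) \<Longrightarrow>
      (\<lambda>n. \<integral>x. g x \<partial>Ms n) \<longlonglongrightarrow> (\<integral>x. g x \<partial>M)"
  shows "weak_conv_seq Ms M"
  unfolding weak_conv_seq_def
proof (intro allI impI)
  fix g :: "'a \<Rightarrow> real"
  assume g: "continuous_on UNIV g" "bounded (range g)"
  then obtain B where B: "\<And>x. \<bar>g x\<bar> \<le> B"
    by (auto simp: bounded_iff)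
  show "(\<lambda>n. integral\<^sup>L (Ms n) g) \<longlonglongrightarrow> integral\<^sup>L M g"
  proof (rule order_tendstoI)
    show "\<forall>\<^sub>F n in sequentially. a < integral\<^sup>L (Ms n) g" if "a < integral\<^sup>L M g" for a
      using lipschitz by (rule eventually_less_integral_if_lipschitz[OF Ms M _ g(1) B that])
    show "\<forall>\<^sub>F n in sequentially. integral\<^sup>L (Ms n) g < a" if "integral\<^sup>L M g < a" for a
    proof -
      have "\<forall>\<^sub>F n in sequentially. - a < (\<integral>x. - g x \<partial>Ms n)"
        using lipschitz
        by (rule eventually_less_integral_if_lipschitz[OF Ms M _ continuous_on_minus[OF g(1)]])
          (use B that in auto)
      then show ?thesis
        by simp
    qed
  qed
qed

section \<open>Polygonal interpolation in C[0,1]\<close>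

lemma Rep_I01_bounds: "0 \<le> Rep_I01 s" "Rep_I01 s \<le> 1"
  using Rep_I01[of s] by auto

lemma continuous_on_Rep_I01: "continuous_on UNIV Rep_I01"
  unfolding continuous_on_iff dist_I01_def by blast

lemma compact_UNIV_I01: "compact (UNIV :: I01 set)"
proof -
  have "continuous_on {0..1} Abs_I01"
    unfolding continuous_on_iff dist_I01_def by (metis Abs_I01_inverse)
  moreover have "UNIV = Abs_I01 ` {0..1}"
    using type_definition.Abs_image[OF type_definition_I01] by simp
  ultimately show ?thesis
    using compact_continuous_image[of "{0..1}" Abs_I01] by simp
qed

definition tent :: "nat \<Rightarrow> nat \<Rightarrow> real \<Rightarrow> real"
  where "tent m i u = max 0 (1 - \<bar>real m * u - real i\<bar>)"

lemma tent_nonneg: "0 \<le> tent m i u"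
  by (simp add: tent_def)

lemma tent_nonzero_imp_near: "tent m i u \<noteq> 0 \<Longrightarrow> \<bar>real m * u - real i\<bar> < 1"
  by (auto simp: tent_def)

lemma sum_tent_cell:
  assumes "j < m" "real j \<le> real m * u" "real m * u \<le> real j + 1"
  shows "(\<Sum>i\<le>m. x i * tent m i u) = (1 - (real m * u - j)) * x j + (real m * u - j) * x (Suc j)"
proof -
  have "tent m i u = 0" if "i \<le> m" "i \<notin> {j, Suc j}" for i
  proof -
    have "real i + 1 \<le> real j \<or> real j + 2 \<le> real i"
      using that by auto
    then show ?thesis
      using assms by (auto simp: tent_def)
  qed
  then have "(\<Sum>i\<le>m. x i * tent m i u) = (\<Sum>i\<in>{j, Suc j}. x i * tent m i u)"
    using assms(1) by (intro sum.mono_neutral_right) auto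
  then show ?thesis
    using assms by (simp add: tent_def)
qed

lemma tent_cell_exists:
  assumes "m \<ge> 1" "0 \<le> u" "u \<le> 1"
  obtains j where "j < m" "real j \<le> real m * u" "real m * u \<le> real j + 1"
proof (cases "u = 1")
  case True
  then show ?thesis
    using that[of "m - 1"] assms by (simp add: of_nat_diff)
next
  case False
  then have "0 \<le> real m * u" "real m * u < real m"
    using assms by auto
  then show ?thesis
    using that[of "nat \<lfloor>real m * u\<rfloor>"] by linarith
qed

lemma sum_tent_eq_1:
  assumes "m \<ge> 1" "0 \<le> u" "u \<le> 1"
  shows "(\<Sum>i\<le>m. tent m i u) = 1"
proof -
  obtain j where "j < m" "real j \<le> real m * u" "real m * u \<le> real j + 1"
    using tent_cell_exists assms by blast
  from sum_tent_cell[OF this, of "\<lambda>_. 1"] show ?thesis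
    by simp
qed

definition grid :: "nat \<Rightarrow> nat \<Rightarrow> I01"
  where "grid m j = Abs_I01 (real j / real m)"

lemma Rep_grid: "j \<le> m \<Longrightarrow> Rep_I01 (grid m j) = real j / real m"
  unfolding grid_def by (rule Abs_I01_inverse) (auto simp: divide_le_eq_1)

lemma dist_grid_lt:
  assumes "tent m i (Rep_I01 s) \<noteq> 0" "i \<le> m" "m \<ge> 1"
  shows "dist (grid m i) s < 1 / real m"
proof -
  have "\<bar>real i / real m - Rep_I01 s\<bar> = \<bar>real m * Rep_I01 s - real i\<bar> / real m"
    using assms(3) by (simp add: abs_minus_commute flip: abs_divide) (simp add: field_simps)
  then show ?thesis
    using tent_nonzero_imp_near[OF assms(1)] assms(3) Rep_grid[OF assms(2)]
    by (simp add: dist_I01_def dist_real_def divide_strict_right_mono)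
qed

lemma dist_grid_Suc: "Suc j \<le> m \<Longrightarrow> dist (grid m (Suc j)) (grid m j) = 1 / real m"
  by (simp add: dist_I01_def dist_real_def Rep_grid flip: diff_divide_distrib)

definition tent_bcontfun :: "nat \<Rightarrow> nat \<Rightarrow> C01"
  where "tent_bcontfun m i = Bcontfun (\<lambda>s. tent m i (Rep_I01 s))"

lemma apply_tent_bcontfun [simp]: "tent_bcontfun m i s = tent m i (Rep_I01 s)"
proof -
  have "(\<lambda>s. tent m i (Rep_I01 s)) \<in> bcontfun"
  proof (rule bcontfun_normI)
    show "continuous_on UNIV (\<lambda>s. tent m i (Rep_I01 s))"
      unfolding tent_def by (intro continuous_intros continuous_on_Rep_I01)
    show "norm (tent m i (Rep_I01 s)) \<le> 1" for s
      by (auto simp: tent_def)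
  qed
  then show ?thesis
    by (simp add: tent_bcontfun_def Bcontfun_inverse)
qed

definition interp :: "nat \<Rightarrow> (nat \<Rightarrow> real) \<Rightarrow> C01"
  where "interp m x = (\<Sum>i\<le>m. x i *\<^sub>R tent_bcontfun m i)"

lemma apply_interp: "interp m x s = (\<Sum>i\<le>m. x i * tent m i (Rep_I01 s))"
proof -
  have "apply_bcontfun (\<Sum>i\<in>A. F i) s = (\<Sum>i\<in>A. F i s)" for A and F :: "nat \<Rightarrow> C01"
    by (induction A rule: infinite_finite_induct) auto
  then show ?thesis
    by (simp add: interp_def)
qed

lemma continuous_on_interp: "continuous_on UNIV (interp m)"
  unfolding interp_def by (intro continuous_intros continuous_on_product_coordinates)

lemma continuous_on_fidi_proj: "continuous_on UNIV (fidi_proj k t)"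
proof -
  have eval: "continuous_on UNIV (\<lambda>f::C01. f s)" for s
    unfolding continuous_on_iff by (metis dist_bounded le_less_trans)
  show ?thesis
    unfolding fidi_proj_def
  proof (intro continuous_on_coordinatewise_then_product)
    show "continuous_on UNIV (\<lambda>f::C01. if i < k then apply_bcontfun f (t i) else 0)" for i
      using eval[of "t i"] by (cases "i < k") auto
  qed
qed

definition grid_values :: "nat \<Rightarrow> C01 \<Rightarrow> nat \<Rightarrow> real"
  where "grid_values m f = fidi_proj (Suc m) (grid m) f"

lemma grid_values_apply: "i \<le> m \<Longrightarrow> grid_values m f i = f (grid m i)"
  by (simp add: grid_values_def fidi_proj_def)

definition polygon :: "nat \<Rightarrow> C01 \<Rightarrow> C01"
  where "polygon m f = interp m (grid_values m f)"

lemma apply_polygon: "polygon m f s = (\<Sum>i\<le>m. f (grid m i) * tent m i (Rep_I01 s))"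
  by (simp add: polygon_def apply_interp grid_values_apply)

lemma continuous_on_polygon: "continuous_on UNIV (polygon m)"
  unfolding polygon_def grid_values_def
  by (rule continuous_on_compose2[OF continuous_on_interp continuous_on_fidi_proj]) auto

section \<open>Approximation error of the polygon\<close>

lemma eventually_dist_grid_oscillation:
  fixes f :: C01
  assumes "e > 0"
  shows "\<forall>\<^sub>F m in sequentially. \<forall>s t. dist s t \<le> 1 / real m \<longrightarrow> dist (f s) (f t) < e"
proof -
  have "uniformly_continuous_on UNIV (apply_bcontfun f)"
    by (rule compact_uniformly_continuous[OF _ compact_UNIV_I01]) simp
  then obtain d where "d > 0" and d: "\<And>s t. dist s t < d \<Longrightarrow> dist (f s) (f t) < e"
    using assms unfolding uniformly_continuous_on_def by (meson UNIV_I)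
  have "\<forall>\<^sub>F m in sequentially. 1 / real m < d"
    using lim_inverse_n' \<open>d > 0\<close> by (rule order_tendstoD)
  then show ?thesis
    by (rule eventually_mono) (use d in \<open>fastforce intro: le_less_trans\<close>)
qed

lemma polygon_error_le:
  fixes f :: C01
  assumes "m \<ge> 1" and osc: "\<And>s t. dist s t \<le> 1 / real m \<Longrightarrow> dist (f s) (f t) < e"
  shows "dist (f s) (polygon m f s) \<le> e"
proof -
  let ?u = "Rep_I01 s"
  have "f s - polygon m f s = (\<Sum>i\<le>m. (f s - f (grid m i)) * tent m i ?u)"
    using sum_tent_eq_1[OF assms(1) Rep_I01_bounds[of s]]
    by (simp add: apply_polygon left_diff_distrib sum_subtractf flip: sum_distrib_left)
  also have "\<bar>\<dots>\<bar> \<le> (\<Sum>i\<le>m. \<bar>f s - f (grid m i)\<bar> * tent m i ?u)"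
    by (rule order_trans[OF sum_abs]) (simp add: abs_mult abs_of_nonneg tent_nonneg)
  also have "\<dots> \<le> (\<Sum>i\<le>m. e * tent m i ?u)"
  proof (rule sum_mono)
    fix i assume "i \<in> {..m}"
    then have "tent m i ?u \<noteq> 0 \<Longrightarrow> \<bar>f s - f (grid m i)\<bar> < e"
      using osc[of s "grid m i"] dist_grid_lt[of m i s] assms(1)
      by (simp add: dist_real_def dist_commute)
    then show "\<bar>f s - f (grid m i)\<bar> * tent m i ?u \<le> e * tent m i ?u"
      by (cases "tent m i ?u = 0") (auto intro: mult_right_mono tent_nonneg)
  qed
  also have "\<dots> = e"
    using sum_tent_eq_1[OF assms(1) Rep_I01_bounds[of s]] by (simp flip: sum_distrib_left)
  finally show ?thesis
    by (simp add: dist_real_def)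
qed

lemma tendsto_polygon: "(\<lambda>m. polygon m f) \<longlonglongrightarrow> f"
proof (rule tendstoI)
  fix e :: real assume "e > 0"
  have "\<forall>\<^sub>F m in sequentially. m \<ge> 1 \<and> (\<forall>s t. dist s t \<le> 1 / real m \<longrightarrow> dist (f s) (f t) < e / 2)"
    using eventually_ge_at_top eventually_dist_grid_oscillation[of "e / 2" f] \<open>e > 0\<close>
    by (auto intro: eventually_conj)
  then show "\<forall>\<^sub>F m in sequentially. dist (polygon m f) f < e"
  proof (rule eventually_mono)
    fix m assume "m \<ge> 1 \<and> (\<forall>s t. dist s t \<le> 1 / real m \<longrightarrow> dist (f s) (f t) < e / 2)"
    then have "dist (polygon m f) f \<le> e / 2"
      using polygon_error_le by (metis dist_bound dist_commute)
    then show "dist (polygon m f) f < e"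
      using \<open>e > 0\<close> by simp
  qed
qed

lemma convex_on_chord_gap:
  fixes F :: "real \<Rightarrow> real"
  assumes F: "convex_on S F" and S: "x \<in> S" "x + h \<in> S" "x + 2 * h \<in> S" "x + \<theta> * h \<in> S"
    and \<theta>: "0 \<le> \<theta>" "\<theta> \<le> 1"
  shows "\<bar>(1 - \<theta>) * F x + \<theta> * F (x + h) - F (x + \<theta> * h)\<bar> \<le> \<bar>F x - 2 * F (x + h) + F (x + 2 * h)\<bar>"
proof -
  have upper: "F (x + \<theta> * h) \<le> (1 - \<theta>) * F x + \<theta> * F (x + h)"
    using convex_onD[OF F \<theta> S(1,2)] by (simp add: algebra_simps)
  define t where "t = (1 - \<theta>) / (2 - \<theta>)"
  have t: "0 \<le> t" "t \<le> 1" "(2 - \<theta>) * (1 - t) = 1" "(2 - \<theta>) * t = 1 - \<theta>"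
    using \<theta> by (auto simp: t_def field_simps)
  \<comment> \<open>convexity at \<open>x + h\<close>, which lies between \<open>x + \<theta> * h\<close> and \<open>x + 2 * h\<close>\<close>
  have "(2 - \<theta>) * ((1 - t) * (x + \<theta> * h) + t * (x + 2 * h))
      = ((2 - \<theta>) * (1 - t)) * (x + \<theta> * h) + ((2 - \<theta>) * t) * (x + 2 * h)"
    by (simp add: algebra_simps)
  also have "\<dots> = (2 - \<theta>) * (x + h)"
    unfolding t(3,4) by (simp add: algebra_simps)
  finally have "x + h = (1 - t) *\<^sub>R (x + \<theta> * h) + t *\<^sub>R (x + 2 * h)"
    using \<theta> by simp
  then have "F (x + h) \<le> (1 - t) * F (x + \<theta> * h) + t * F (x + 2 * h)"
    using convex_onD[OF F t(1,2) S(4,3)] by simp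
  then have "(2 - \<theta>) * F (x + h) \<le> (2 - \<theta>) * ((1 - t) * F (x + \<theta> * h) + t * F (x + 2 * h))"
    using \<theta> by (intro mult_left_mono) auto
  also have "\<dots> = ((2 - \<theta>) * (1 - t)) * F (x + \<theta> * h) + ((2 - \<theta>) * t) * F (x + 2 * h)"
    by (simp add: algebra_simps)
  finally have "(2 - \<theta>) * F (x + h) \<le> F (x + \<theta> * h) + (1 - \<theta>) * F (x + 2 * h)"
    unfolding t(3,4) by simp
  then have "(1 - \<theta>) * F x + \<theta> * F (x + h) - F (x + \<theta> * h)
      \<le> (1 - \<theta>) * (F x - 2 * F (x + h) + F (x + 2 * h))"
    by (simp add: algebra_simps)
  also have "\<dots> \<le> (1 - \<theta>) * \<bar>F x - 2 * F (x + h) + F (x + 2 * h)\<bar>"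
    using \<theta> by (intro mult_left_mono) auto
  also have "\<dots> \<le> \<bar>F x - 2 * F (x + h) + F (x + 2 * h)\<bar>"
    using \<theta> by (intro mult_left_le_one_le) auto
  finally show ?thesis
    using upper by simp
qed

definition second_diff :: "(nat \<Rightarrow> real) \<Rightarrow> nat \<Rightarrow> real"
  where "second_diff x j = x j - 2 * x (Suc j) + x (Suc (Suc j))"

primrec max_second_diff :: "nat \<Rightarrow> (nat \<Rightarrow> real) \<Rightarrow> real"
  where
    "max_second_diff 0 x = 0"
  | "max_second_diff (Suc k) x = max (max_second_diff k x) \<bar>second_diff x k\<bar>"

lemma max_second_diff_nonneg: "0 \<le> max_second_diff k x"
  by (induction k) auto

lemma abs_second_diff_le_max: "j < k \<Longrightarrow> \<bar>second_diff x j\<bar> \<le> max_second_diff k x"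
  by (induction k) (auto simp: less_Suc_eq)

lemma max_second_diff_le: "(\<And>j. j < k \<Longrightarrow> \<bar>second_diff x j\<bar> \<le> c) \<Longrightarrow> 0 \<le> c \<Longrightarrow> max_second_diff k x \<le> c"
  by (induction k) auto

lemma continuous_on_max_second_diff: "continuous_on UNIV (max_second_diff k)"
  by (induction k) (auto simp: second_diff_def intro!: continuous_intros continuous_on_product_coordinates)

definition polygon_defect :: "nat \<Rightarrow> C01 \<Rightarrow> real"
  where "polygon_defect m f = max_second_diff (m - 1) (grid_values m f)"

lemma polygon_defect_nonneg: "0 \<le> polygon_defect m f"
  by (simp add: polygon_defect_def max_second_diff_nonneg)

lemma continuous_on_polygon_defect: "continuous_on UNIV (polygon_defect m)"
  unfolding polygon_defect_def grid_values_def
  by (rule continuous_on_compose2[OF continuous_on_max_second_diff continuous_on_fidi_proj]) auto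

text \<open>On the cell \<open>[j/m, (j+1)/m]\<close> the gap between chord and graph of a convex function is
  controlled by a second difference over a neighbouring cell: the next one, or the previous one
  (a negative step \<open>h\<close>) for the last cell.\<close>

lemma convex_on_grid_chord_gap:
  fixes F :: "real \<Rightarrow> real"
  assumes F: "convex_on {0..1} F" and "m \<ge> 2" "j < m" and \<theta>: "0 \<le> \<theta>" "\<theta> \<le> 1"
  obtains i where "Suc (Suc i) \<le> m"
    "\<bar>(1 - \<theta>) * F (real j / m) + \<theta> * F (real (Suc j) / m) - F ((real j + \<theta>) / m)\<bar>
      \<le> \<bar>F (real i / m) - 2 * F (real (Suc i) / m) + F (real (Suc (Suc i)) / m)\<bar>"
proof -
  have grid_in: "real i / real m \<in> {0..1}" if "i \<le> m" for i
    using that by (auto simp: divide_le_eq_1)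
  have point_in: "(real j + \<theta>) / m \<in> {0..1}"
    using assms by (auto simp: divide_le_eq_1)
  consider (inner) "Suc (Suc j) \<le> m" | (last) "Suc j = m" "1 \<le> j"
    using assms(2,3) by linarith
  then show ?thesis
  proof cases
    case inner
    have points: "real j / m + 1 / m = real (Suc j) / m" "real j / m + 2 * (1 / m) = real (Suc (Suc j)) / m"
      "real j / m + \<theta> * (1 / m) = (real j + \<theta>) / m"
      using assms(2) by (simp_all add: field_simps)
    have "\<bar>(1 - \<theta>) * F (real j / m) + \<theta> * F (real (Suc j) / m) - F ((real j + \<theta>) / m)\<bar>
      \<le> \<bar>F (real j / m) - 2 * F (real (Suc j) / m) + F (real (Suc (Suc j)) / m)\<bar>"
      by (rule convex_on_chord_gap[OF F _ _ _ _ \<theta>, of "real j / m" "1 / m", unfolded points])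
        (use grid_in inner point_in in auto)
    then show ?thesis
      using that[of j] inner by blast
  next
    case last
    have points: "real (Suc j) / m + - 1 / m = real j / m"
      "real (Suc j) / m + 2 * (- 1 / m) = real (j - 1) / m"
      "real (Suc j) / m + (1 - \<theta>) * (- 1 / m) = (real j + \<theta>) / m"
      using assms(2) last(2) by (simp_all add: of_nat_diff field_simps)
    have "\<bar>(1 - (1 - \<theta>)) * F (real (Suc j) / m) + (1 - \<theta>) * F (real j / m) - F ((real j + \<theta>) / m)\<bar>
      \<le> \<bar>F (real (Suc j) / m) - 2 * F (real j / m) + F (real (j - 1) / m)\<bar>"
      by (rule convex_on_chord_gap[OF F, of "real (Suc j) / m" "- 1 / m" "1 - \<theta>", unfolded points])
        (use grid_in last point_in \<theta> in auto)
    moreover have "Suc (j - 1) = j"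
      using last(2) by simp
    ultimately show ?thesis
      using that[of "j - 1"] last by (simp add: abs_minus_commute algebra_simps)
  qed
qed

lemma convex_polygon_error_pointwise:
  assumes "convex_C01 f" "m \<ge> 2"
  shows "dist (f s) (polygon m f s) \<le> max_second_diff (m - 1) (grid_values m f)"
proof -
  define F where "F v = f (Abs_I01 v)" for v
  have F: "convex_on {0..1} F"
    using assms(1) unfolding convex_C01_def F_def .
  have F_grid: "F (real i / real m) = grid_values m f i" if "i \<le> m" for i
    using that by (simp add: F_def grid_def grid_values_apply)
  let ?u = "Rep_I01 s"
  obtain j where j: "j < m" "real j \<le> real m * ?u" "real m * ?u \<le> real j + 1"
    using tent_cell_exists[of m ?u] assms(2) Rep_I01_bounds[of s] by auto
  define \<theta> where "\<theta> = real m * ?u - real j"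
  have \<theta>: "0 \<le> \<theta>" "\<theta> \<le> 1"
    using j by (auto simp: \<theta>_def)
  have "f s = F ((real j + \<theta>) / m)"
    using assms(2) by (simp add: F_def \<theta>_def Rep_I01_inverse)
  moreover have "polygon m f s = (1 - \<theta>) * F (real j / m) + \<theta> * F (real (Suc j) / m)"
    using sum_tent_cell[OF j, of "grid_values m f"] j F_grid[of j] F_grid[of "Suc j"]
    by (simp add: polygon_def apply_interp \<theta>_def)
  moreover obtain i where "Suc (Suc i) \<le> m"
    "\<bar>(1 - \<theta>) * F (real j / m) + \<theta> * F (real (Suc j) / m) - F ((real j + \<theta>) / m)\<bar>
      \<le> \<bar>second_diff (grid_values m f) i\<bar>"
    using convex_on_grid_chord_gap[OF F assms(2) j(1) \<theta>] F_grid unfolding second_diff_def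
    by (metis Suc_leD)
  moreover have "\<bar>second_diff (grid_values m f) i\<bar> \<le> max_second_diff (m - 1) (grid_values m f)"
    if "Suc (Suc i) \<le> m" for i
    using that by (intro abs_second_diff_le_max) simp
  ultimately show ?thesis
    by (force simp: dist_real_def abs_minus_commute)
qed

lemma convex_polygon_error:
  assumes "convex_C01 f" "m \<ge> 2"
  shows "dist f (polygon m f) \<le> polygon_defect m f"
  using convex_polygon_error_pointwise[OF assms] unfolding polygon_defect_def by (rule dist_bound)

lemma tendsto_polygon_defect: "(\<lambda>m. polygon_defect m f) \<longlonglongrightarrow> 0"
proof (rule tendstoI)
  fix e :: real assume "e > 0"
  have "\<forall>\<^sub>F m in sequentially. m \<ge> 1 \<and> (\<forall>s t. dist s t \<le> 1 / real m \<longrightarrow> dist (f s) (f t) < e / 3)"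
    using eventually_ge_at_top eventually_dist_grid_oscillation[of "e / 3" f] \<open>e > 0\<close>
    by (auto intro: eventually_conj)
  then show "\<forall>\<^sub>F m in sequentially. dist (polygon_defect m f) 0 < e"
  proof (rule eventually_mono)
    fix m assume m: "m \<ge> 1 \<and> (\<forall>s t. dist s t \<le> 1 / real m \<longrightarrow> dist (f s) (f t) < e / 3)"
    have step: "\<bar>grid_values m f (Suc j) - grid_values m f j\<bar> < e / 3" if "Suc j \<le> m" for j
      using m dist_grid_Suc[OF that] that by (simp add: grid_values_apply dist_real_def)
    have "max_second_diff (m - 1) (grid_values m f) \<le> 2 * e / 3"
    proof (rule max_second_diff_le)
      fix j assume "j < m - 1"
      then have "Suc (Suc j) \<le> m"
        by simp
      let ?x = "grid_values m f"
      have "\<bar>second_diff ?x j\<bar> = \<bar>(?x (Suc (Suc j)) - ?x (Suc j)) - (?x (Suc j) - ?x j)\<bar>"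
        by (simp add: second_diff_def algebra_simps)
      also have "\<dots> \<le> \<bar>?x (Suc (Suc j)) - ?x (Suc j)\<bar> + \<bar>?x (Suc j) - ?x j\<bar>"
        by (rule abs_triangle_ineq4)
      finally show "\<bar>second_diff ?x j\<bar> \<le> 2 * e / 3"
        using step[of j] step[of "Suc j"] \<open>Suc (Suc j) \<le> m\<close> by simp
    qed (use \<open>e > 0\<close> in simp)
    then show "dist (polygon_defect m f) 0 < e"
      using max_second_diff_nonneg[of "m - 1" "grid_values m f"] \<open>e > 0\<close>
      by (simp add: polygon_defect_def)
  qed
qed

section \<open>Convergence of integrals of bounded Lipschitz functions\<close>

lemma tendsto_zero_by_approximation:
  fixes u :: "nat \<Rightarrow> real" and b :: "nat \<Rightarrow> nat \<Rightarrow> real" and \<beta> :: "nat \<Rightarrow> real"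
  assumes bound: "\<forall>\<^sub>F m in sequentially. \<forall>n. \<bar>u n\<bar> \<le> b m n"
    and b: "\<And>m. (\<lambda>n. b m n) \<longlonglongrightarrow> \<beta> m" and \<beta>: "\<beta> \<longlonglongrightarrow> 0"
  shows "u \<longlonglongrightarrow> 0"
proof (rule tendstoI)
  fix e :: real assume "e > 0"
  have "\<forall>\<^sub>F m in sequentially. (\<forall>n. \<bar>u n\<bar> \<le> b m n) \<and> \<beta> m < e / 2"
    using bound order_tendstoD(2)[OF \<beta>, of "e / 2"] \<open>e > 0\<close> by (auto intro: eventually_conj)
  then obtain m where m: "\<And>n. \<bar>u n\<bar> \<le> b m n" "\<beta> m < e / 2"
    by (auto simp: eventually_sequentially)
  have "\<forall>\<^sub>F n in sequentially. b m n < \<beta> m + e / 2"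
    using order_tendstoD(2)[OF b[of m], of "\<beta> m + e / 2"] \<open>e > 0\<close> by simp
  then show "\<forall>\<^sub>F n in sequentially. dist (u n) 0 < e"
  proof (rule eventually_mono)
    fix n assume "b m n < \<beta> m + e / 2"
    then show "dist (u n) 0 < e"
      using m(1)[of n] m(2) by simp
  qed
qed

lemma tendsto_integral_grid_values:
  fixes Ps :: "nat \<Rightarrow> C01 measure" and G :: "(nat \<Rightarrow> real) \<Rightarrow> real"
  assumes "\<And>n. sets (Ps n) = sets borel" "sets P = sets borel"
    and fidi: "\<And>k t. k \<ge> 1 \<Longrightarrow>
      weak_conv_seq (\<lambda>n. distr (Ps n) borel (fidi_proj k t)) (distr P borel (fidi_proj k t))"
    and "continuous_on UNIV G" "bounded (range G)"
  shows "(\<lambda>n. \<integral>f. G (grid_values m f) \<partial>Ps n) \<longlonglongrightarrow> (\<integral>f. G (grid_values m f) \<partial>P)"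
  unfolding grid_values_def
  using weak_conv_seq_distrD[OF fidi assms(1,2) continuous_on_fidi_proj assms(4,5)] by simp

lemma tendsto_integral_lipschitz_polygon_error:
  fixes g :: "C01 \<Rightarrow> real"
  assumes M: "finite_measure M" "sets M = sets borel"
    and g: "K-lipschitz_on UNIV g" "\<And>f. \<bar>g f\<bar> \<le> B"
  shows "(\<lambda>m. \<integral>f. \<bar>g f - g (polygon m f)\<bar> \<partial>M) \<longlonglongrightarrow> 0"
proof -
  have g_cont: "continuous_on UNIV g"
    using g(1) by (rule lipschitz_on_continuous_on)
  have "(\<lambda>m. \<bar>g f - g (polygon m f)\<bar>) \<longlonglongrightarrow> 0" for f
  proof -
    have "(\<lambda>m. g f - g (polygon m f)) \<longlonglongrightarrow> g f - g f"
      using continuous_on_tendsto_compose[OF g_cont tendsto_polygon, of f]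
      by (intro tendsto_diff tendsto_const) simp
    then show ?thesis
      by (intro tendsto_rabs_zero) simp
  qed
  moreover have "continuous_on UNIV (\<lambda>f. \<bar>g f - g (polygon m f)\<bar>)" for m
    using continuous_on_compose2[OF g_cont continuous_on_polygon]
    by (intro continuous_intros g_cont) auto
  moreover have "\<bar>\<bar>g f - g (polygon m f)\<bar>\<bar> \<le> 2 * B" for m f
    using g(2)[of f] g(2)[of "polygon m f"] by simp
  ultimately have "(\<lambda>m. \<integral>f. \<bar>g f - g (polygon m f)\<bar> \<partial>M) \<longlonglongrightarrow> (\<integral>f. 0 \<partial>M)"
    by (intro tendsto_integral_bounded_continuous[OF M]) auto
  then show ?thesis
    by simp
qed

lemma tendsto_integral_min_polygon_defect:
  assumes M: "finite_measure M" "sets M = sets borel" and "0 \<le> B" "0 \<le> K"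
  shows "(\<lambda>m. \<integral>f. min B (K * polygon_defect m f) \<partial>M) \<longlonglongrightarrow> 0"
proof -
  have "(\<lambda>m. min B (K * polygon_defect m f)) \<longlonglongrightarrow> min B 0" for f
    by (intro tendsto_min tendsto_const tendsto_mult_right_zero tendsto_polygon_defect)
  moreover have "\<bar>min B (K * polygon_defect m f)\<bar> \<le> B" for m f
    using \<open>0 \<le> B\<close> \<open>0 \<le> K\<close> max_second_diff_nonneg by (simp add: polygon_defect_def)
  ultimately have "(\<lambda>m. \<integral>f. min B (K * polygon_defect m f) \<partial>M) \<longlonglongrightarrow> (\<integral>f. 0 \<partial>M)"
    using \<open>0 \<le> B\<close>
    by (intro tendsto_integral_bounded_continuous[OF M]
        continuous_intros continuous_on_polygon_defect) auto
  then show ?thesis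
    by simp
qed

lemma lipschitz_polygon_error_le_defect:
  fixes g :: "C01 \<Rightarrow> real"
  assumes g: "K-lipschitz_on UNIV g" "\<And>f. \<bar>g f\<bar> \<le> B" and "convex_C01 f" "m \<ge> 2"
  shows "\<bar>g f - g (polygon m f)\<bar> \<le> min (2 * B) (K * polygon_defect m f)"
  using lipschitz_onD[OF g(1), of f "polygon m f"] convex_polygon_error[OF assms(3,4)]
    mult_left_mono[OF _ lipschitz_on_nonneg[OF g(1)]] g(2)[of f] g(2)[of "polygon m f"]
  by (fastforce simp: dist_real_def)

lemma integral_lipschitz_polygon_error_le:
  fixes g :: "C01 \<Rightarrow> real"
  assumes M: "finite_measure M" "sets M = sets borel"
    and g: "K-lipschitz_on UNIV g" "\<And>f. \<bar>g f\<bar> \<le> B"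
  shows "\<bar>(\<integral>f. g f \<partial>M) - (\<integral>f. g (polygon m f) \<partial>M)\<bar> \<le> (\<integral>f. \<bar>g f - g (polygon m f)\<bar> \<partial>M)"
    and "AE f in M. convex_C01 f \<Longrightarrow> m \<ge> 2 \<Longrightarrow>
      (\<integral>f. \<bar>g f - g (polygon m f)\<bar> \<partial>M) \<le> (\<integral>f. min (2 * B) (K * polygon_defect m f) \<partial>M)"
proof -
  have g_cont: "continuous_on UNIV g"
    using g(1) by (rule lipschitz_on_continuous_on)
  have g_polygon_cont: "continuous_on UNIV (\<lambda>f. g (polygon m f))"
    by (rule continuous_on_compose2[OF g_cont continuous_on_polygon]) auto
  have "0 \<le> B" "0 \<le> K"
    using g(2)[of undefined] lipschitz_on_nonneg[OF g(1)] by auto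
  then have "\<bar>min (2 * B) (K * polygon_defect m f)\<bar> \<le> 2 * B" for f
    using polygon_defect_nonneg[of m f] by simp
  then have integrable: "integrable M g" "integrable M (\<lambda>f. g (polygon m f))"
    "integrable M (\<lambda>f. min (2 * B) (K * polygon_defect m f))"
    using g(2)
    by (auto intro!: integrable_bounded_continuous[OF M] g_cont g_polygon_cont continuous_intros
        continuous_on_polygon_defect)
  then show "\<bar>(\<integral>f. g f \<partial>M) - (\<integral>f. g (polygon m f) \<partial>M)\<bar> \<le> (\<integral>f. \<bar>g f - g (polygon m f)\<bar> \<partial>M)"
    using integral_abs_bound[of M "\<lambda>f. g f - g (polygon m f)"] by simp
  assume convex: "AE f in M. convex_C01 f" and "m \<ge> 2"
  from convex have "AE f in M. \<bar>g f - g (polygon m f)\<bar> \<le> min (2 * B) (K * polygon_defect m f)"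
    by eventually_elim (use lipschitz_polygon_error_le_defect[OF g _ \<open>m \<ge> 2\<close>] in blast)
  then show "(\<integral>f. \<bar>g f - g (polygon m f)\<bar> \<partial>M) \<le> (\<integral>f. min (2 * B) (K * polygon_defect m f) \<partial>M)"
    using integrable by (intro integral_mono_AE) auto
qed

lemma tendsto_integral_lipschitz_if_convex:
  fixes Ps :: "nat \<Rightarrow> C01 measure" and P :: "C01 measure" and g :: "C01 \<Rightarrow> real"
  assumes Ps: "\<And>n. prob_space (Ps n)" "\<And>n. sets (Ps n) = sets borel"
    and P: "prob_space P" "sets P = sets borel"
    and convex: "\<And>n. AE f in Ps n. convex_C01 f"
    and fidi: "\<And>k t. k \<ge> 1 \<Longrightarrow>
      weak_conv_seq (\<lambda>n. distr (Ps n) borel (fidi_proj k t)) (distr P borel (fidi_proj k t))"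
    and g: "K-lipschitz_on UNIV g" "\<And>f. \<bar>g f\<bar> \<le> B"
  shows "(\<lambda>n. \<integral>f. g f \<partial>Ps n) \<longlonglongrightarrow> (\<integral>f. g f \<partial>P)"
proof -
  have finite: "finite_measure (Ps n)" "finite_measure P" for n
    using Ps(1) P(1) by (simp_all add: prob_space.finite_measure)
  have "0 \<le> B" "0 \<le> K"
    using g(2)[of undefined] lipschitz_on_nonneg[OF g(1)] by auto
  define err where "err m = (\<integral>f. \<bar>g f - g (polygon m f)\<bar> \<partial>P)" for m
  define E where "E m f = min (2 * B) (K * polygon_defect m f)" for m f
  define approx where "approx m n = (\<integral>f. E m f \<partial>Ps n)
    + \<bar>(\<integral>f. g (polygon m f) \<partial>Ps n) - (\<integral>f. g (polygon m f) \<partial>P)\<bar> + err m" for m n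
  have "\<forall>\<^sub>F m in sequentially. \<forall>n. \<bar>(\<integral>f. g f \<partial>Ps n) - (\<integral>f. g f \<partial>P)\<bar> \<le> approx m n"
  proof (intro eventually_mono[OF eventually_ge_at_top[of 2]] allI)
    fix m n :: nat assume "2 \<le> m"
    have "\<bar>(\<integral>f. g f \<partial>Ps n) - (\<integral>f. g (polygon m f) \<partial>Ps n)\<bar> \<le> (\<integral>f. E m f \<partial>Ps n)"
      using integral_lipschitz_polygon_error_le[OF finite(1)[of n] Ps(2)[of n] g, where m = m] convex[of n] \<open>2 \<le> m\<close>
      unfolding E_def by linarith
    moreover have "\<bar>(\<integral>f. g f \<partial>P) - (\<integral>f. g (polygon m f) \<partial>P)\<bar> \<le> err m"
      using integral_lipschitz_polygon_error_le(1)[OF finite(2) P(2) g] unfolding err_def .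
    ultimately show "\<bar>(\<integral>f. g f \<partial>Ps n) - (\<integral>f. g f \<partial>P)\<bar> \<le> approx m n"
      unfolding approx_def by arith
  qed
  moreover have "(\<lambda>n. approx m n) \<longlonglongrightarrow> (\<integral>f. E m f \<partial>P) + err m" for m
  proof -
    have "(\<lambda>n. \<integral>f. g (polygon m f) \<partial>Ps n) \<longlonglongrightarrow> (\<integral>f. g (polygon m f) \<partial>P)"
      unfolding polygon_def using g(2) lipschitz_on_continuous_on[OF g(1)]
      by (intro tendsto_integral_grid_values[OF Ps(2) P(2) fidi] boundedI[where B = B]
          continuous_on_compose2[OF _ continuous_on_interp]) auto
    moreover have "(\<lambda>n. \<integral>f. E m f \<partial>Ps n) \<longlonglongrightarrow> (\<integral>f. E m f \<partial>P)"
      unfolding E_def polygon_defect_def using \<open>0 \<le> B\<close> \<open>0 \<le> K\<close> max_second_diff_nonneg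
      by (intro tendsto_integral_grid_values[OF Ps(2) P(2) fidi] boundedI[where B = "2 * B"]
          continuous_intros continuous_on_max_second_diff) auto
    ultimately have "(\<lambda>n. approx m n) \<longlonglongrightarrow> (\<integral>f. E m f \<partial>P) + 0 + err m"
      unfolding approx_def by (intro tendsto_add tendsto_const tendsto_rabs_zero LIM_zero)
    then show ?thesis
      by simp
  qed
  moreover have "(\<lambda>m. (\<integral>f. E m f \<partial>P) + err m) \<longlonglongrightarrow> 0"
    using tendsto_add[OF tendsto_integral_min_polygon_defect[OF finite(2) P(2) _ \<open>0 \<le> K\<close>]
      tendsto_integral_lipschitz_polygon_error[OF finite(2) P(2) g]] \<open>0 \<le> B\<close>
    unfolding E_def err_def by simp
  ultimately have "(\<lambda>n. (\<integral>f. g f \<partial>Ps n) - (\<integral>f. g f \<partial>P)) \<longlonglongrightarrow> 0"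
    by (rule tendsto_zero_by_approximation)
  then show ?thesis
    by (rule LIM_zero_cancel)
qed

theorem proposition7p6:
  fixes Ps :: "nat \<Rightarrow> C01 measure" and P :: "C01 measure"
  assumes "\<And>n. prob_space (Ps n)"
    and "\<And>n. sets (Ps n) = sets borel"
    and "prob_space P"
    and "sets P = sets borel"
    and "\<And>n. AE f in Ps n. convex_C01 f"
    and "\<And>k t. k \<ge> 1 \<Longrightarrow>
           weak_conv_seq (\<lambda>n. distr (Ps n) borel (fidi_proj k t)) (distr P borel (fidi_proj k t))"
  shows "weak_conv_seq Ps P"
  using assms(1-4)
proof (rule weak_conv_seq_if_lipschitz)
  show "(\<lambda>n. \<integral>f. g f \<partial>Ps n) \<longlonglongrightarrow> (\<integral>f. g f \<partial>P)"
    if "K-lipschitz_on UNIV g" "\<And>f. \<bar>g f\<bar> \<le> B" for g :: "C01 \<Rightarrow> real" and K B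
    using assms that by (rule tendsto_integral_lipschitz_if_convex)
qed

end
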